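(* Let $g_1,g_2$ be monic divisors of $x^m-1$, $h_i=\frac{x^m-1}{g_i}$, $v_1,v_2\in\mathcal{R}$ with $\gcd(v_1v_2-1,x^m-1)=1$, and let $\mathcal{C}$ be the QC code of length $2m$ generated by $(g_1,v_1g_1)$ and $(v_2g_2,g_2)$. (A) Over $\mathbb{F}_q$, $\mathcal{C}$ is Euclidean self-orthogonal iff $h_1\mid\overline{g_1}(1+v_1\overline{v_1})$, $h_1\mid\overline{g_2}(\overline{v_2}+v_1)$ and $h_2\mid\overline{g_2}(1+v_2\overline{v_2})$. (B) Over $\mathbb{F}_{q^2}$, $\mathcal{C}$ is Hermitian self-orthogonal iff $h_1^{[q]}\mid\overline{g_1}(1+v_1^{[q]}\overline{v_1})$, $h_1^{[q]}\mid\overline{g_2}(\overline{v_2}+v_1^{[q]})$ and $h_2^{[q]}\mid\overline{g_2}(v_2^{[q]}\overline{v_2}+1)$. (C) Over $\mathbb{F}_q$, $\mathcal{C}$ is symplectic self-orthogonal iff $h_1\mid\overline{g_1}(\overline{v_1}-v_1)$, $h_1\mid\overline{g_2}(1-\overline{v_2}v_1)$ and $h_2\mid\overline{g_2}(v_2-\overline{v_2})$.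
   Context: $q$ is a prime power; $\mathbb{F}$ is $\mathbb{F}_q$ or $\mathbb{F}_{q^2}$ as indicated; $\mathcal{R}=\mathbb{F}[x]/(x^m-1)$ with elements identified with representatives of degree $<m$; $[k]=(k_0,\dots,k_{m-1})$ for $k=\sum k_ix^i$; $\overline{k}(x)=k(x^{-1})\bmod(x^m-1)$; $k^{[q]}=\sum k_i^qx^i$. For $h\mid x^m-1$, "$h\mid a$" for $a\in\mathcal{R}$ means $h$ divides the representative of $a$. The QC code generated by $(u_{i1},u_{i2})$, $i=1,2$, is $\{([r_1u_{11}+r_2u_{21}],[r_1u_{12}+r_2u_{22}]):r_1,r_2\in\mathcal{R}\}\subseteq\mathbb{F}^{2m}$. Inner products: Euclidean $\sum u_iv_i$; Hermitian $\sum u_i^qv_i$ (over $\mathbb{F}_{q^2}$); symplectic on $\mathbb{F}^{2m}$: $\sum_{i=1}^m(u_iv_{m+i}-u_{m+i}v_i)$. Self-orthogonal means $\mathcal{C}\subseteq\mathcal{C}^\perp$. *)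

theory Defs
  imports "HOL-Computational_Algebra.Polynomial_Factorial"
begin

text \<open>The modulus x^m - 1; elements of R = F[x]/(x^m-1) are represented by
  polynomials of degree < m.\<close>
definition xm1 :: "nat \<Rightarrow> 'a::comm_ring_1 poly" where
  "xm1 m = monom 1 m - 1"

definition cvec :: "nat \<Rightarrow> 'a::field poly \<Rightarrow> 'a list" where
  "cvec m k = map (coeff (k mod xm1 m)) [0..<m]"

text \<open>kbar(x) = k(x^{-1}) mod (x^m - 1).\<close>
definition rbar :: "nat \<Rightarrow> 'a::field poly \<Rightarrow> 'a poly" where
  "rbar m k = (\<Sum>i<m. monom (coeff (k mod xm1 m) i) ((m - i) mod m))"

definition qpow :: "nat \<Rightarrow> 'a::field poly \<Rightarrow> 'a poly" where
  "qpow q k = map_poly (\<lambda>c. c ^ q) k"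

definition rdvd :: "nat \<Rightarrow> 'a::field poly \<Rightarrow> 'a poly \<Rightarrow> bool" where
  "rdvd m h a \<longleftrightarrow> h dvd (a mod xm1 m)"

definition qc_code :: "nat \<Rightarrow> 'a::field poly \<Rightarrow> 'a poly \<Rightarrow> 'a poly \<Rightarrow> 'a poly \<Rightarrow> 'a list set" where
  "qc_code m u11 u12 u21 u22 =
     {cvec m (r1 * u11 + r2 * u21) @ cvec m (r1 * u12 + r2 * u22) | r1 r2.
        degree r1 < m \<and> degree r2 < m}"

definition euclid_ip :: "'a::comm_ring_1 list \<Rightarrow> 'a list \<Rightarrow> 'a" where
  "euclid_ip u v = (\<Sum>i<length u. u ! i * v ! i)"

definition herm_ip :: "nat \<Rightarrow> 'a::comm_ring_1 list \<Rightarrow> 'a list \<Rightarrow> 'a" where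
  "herm_ip q u v = (\<Sum>i<length u. (u ! i) ^ q * v ! i)"

definition sympl_ip :: "nat \<Rightarrow> 'a::comm_ring_1 list \<Rightarrow> 'a list \<Rightarrow> 'a" where
  "sympl_ip m u v = (\<Sum>i<m. u ! i * v ! (m + i) - u ! (m + i) * v ! i)"

definition dual_code :: "nat \<Rightarrow> ('a list \<Rightarrow> 'a list \<Rightarrow> 'a::zero) \<Rightarrow> 'a list set \<Rightarrow> 'a list set" where
  "dual_code n B C = {v. length v = n \<and> (\<forall>u\<in>C. B u v = 0)}"

definition self_orth :: "nat \<Rightarrow> ('a list \<Rightarrow> 'a list \<Rightarrow> 'a::zero) \<Rightarrow> 'a list set \<Rightarrow> bool" where
  "self_orth n B C \<longleftrightarrow> C \<subseteq> dual_code n B C"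

end

(*
  Identify F^(2m) with pairs of residues in R = F[x]/(x^m - 1) through coefficient vectors, and
  write a^- for a(x^(-1)) = a(x^(m-1)). For an involutive automorphism c of F (the identity, or
  x |-> x^q over F_(q^2)), the c-sesquilinear product of the words (a1, a2) and (b1, b2) is the
  constant coefficient of c(a1) b1^- + c(a2) b2^- in R, and the pairing (a, b) |-> [x^0] (a b^-)
  is nondegenerate on R. Expanding codewords r1 u1 + r2 u2 therefore shows that the code is
  self-orthogonal iff x^m - 1 divides the four products of the generators u1 = (g1, v1 g1),
  u2 = (v2 g2, g2). The product of u2 with u1 is the image of that of u1 with u2 under
  a |-> c(a)^-, and the other three are c(g_i) times the brackets of the statement, so cancelling
  c(g_i) from x^m - 1 = c(g_i) c(h_i) leaves c(h_i) as the divisor. The symplectic form is the Euclidean form against the generators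
  (v1 g1, -g1), (g2, -v2 g2). Over a field with q^2 elements, q is a power of the characteristic,
  so x |-> x^q is additive, and it is an involution because x^(q^2) = x.
*)
theory Submission
  imports Defs "HOL-Number_Theory.Cong" "HOL-Algebra.Sylow" "HOL-Algebra.Multiplicative_Group"
begin

hide_const (open) up_ring.coeff up_ring.monom module.smult

section \<open>Finite fields\<close>

lemma prime_CHAR_finite_field: "prime CHAR('a::{finite,field})"
  by (rule prime_CHAR_semidom) (simp add: finite_imp_CHAR_pos)

(* A subgroup H of order r of (F, +) is permuted by translation by any x in H, so r x = 0. *)
lemma prime_dvd_card_imp_eq_CHAR:
  fixes r :: nat
  assumes r: "prime r" and r_dvd: "r dvd card (UNIV :: 'a::{finite,field} set)"
  shows "r = CHAR('a)"
proof -
  define G where "G = \<lparr>carrier = (UNIV :: 'a set), monoid.mult = (+), one = (0 :: 'a)\<rparr>"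
  interpret group G
  proof (rule groupI)
    fix x assume "x \<in> carrier G"
    show "\<exists>y\<in>carrier G. y \<otimes>\<^bsub>G\<^esub> x = \<one>\<^bsub>G\<^esub>"
      by (intro bexI[of _ "- x"]) (auto simp: G_def)
  qed (auto simp: G_def add_ac)
  obtain H where H: "subgroup H G" "card H = r"
    using sylow_thm[OF r group_axioms, of 1 "card (UNIV :: 'a set) div r"] r_dvd
    by (auto simp: order_def G_def)
  have add_closed: "x + y \<in> H" if "x \<in> H" "y \<in> H" for x y
    using subgroup.m_closed[OF H(1) that] by (simp add: G_def)
  have r_times: "of_nat r * x = 0" if x: "x \<in> H" for x
  proof -
    have "(\<lambda>y. x + y) ` H = H"
      using add_closed[OF x] by (intro endo_inj_surj) (auto simp: inj_on_def)
    then have "(\<Sum>y\<in>H. y) = (\<Sum>y\<in>H. x + y)"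
      by (metis add_left_cancel inj_onI sum.reindex_cong)
    then show ?thesis
      using H(2) by (simp add: sum.distrib)
  qed
  have "\<not> H \<subseteq> {0}"
    using card_mono[of "{0 :: 'a}" H] H(2) prime_gt_1_nat[OF r] by auto
  then obtain x where x: "x \<in> H" "x \<noteq> 0"
    by blast
  have "of_nat r * x = 0"
    by (rule r_times[OF x(1)])
  then have "of_nat r = (0 :: 'a)"
    using x(2) by simp
  then have "CHAR('a) dvd r"
    by (simp add: of_nat_eq_0_iff_char_dvd)
  then show ?thesis
    using primes_dvd_imp_eq[OF prime_CHAR_finite_field[where 'a = 'a] r] by simp
qed

lemma card_UNIV_eq_CHAR_power: "\<exists>n. card (UNIV :: 'a::{finite,field} set) = CHAR('a) ^ n"
proof -
  define N where "N = card (UNIV :: 'a set)"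
  have "N \<noteq> 0"
    by (simp add: N_def)
  have "prime_factors N \<subseteq> {CHAR('a)}"
    using prime_dvd_card_imp_eq_CHAR by (auto simp: N_def in_prime_factors_iff)
  have "N = (\<Prod>p\<in>prime_factors N. p ^ multiplicity p N)"
    using prod_prime_factors[OF \<open>N \<noteq> 0\<close>] by simp
  also have "\<dots> = (\<Prod>p\<in>{CHAR('a)}. p ^ multiplicity p N)"
    using \<open>prime_factors N \<subseteq> {CHAR('a)}\<close>
    using prime_CHAR_finite_field[where 'a = 'a]
    by (intro prod.mono_neutral_left) (auto simp: in_prime_factors_iff not_dvd_imp_multiplicity_0)
  finally show ?thesis
    unfolding N_def by auto
qed

lemma power_card_UNIV_eq_self: "(x :: 'a::{finite,field}) ^ card (UNIV :: 'a set) = x"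
proof (cases "x = 0")
  case False
  define G where "G = \<lparr>carrier = UNIV - {0 :: 'a}, monoid.mult = (*), one = (1 :: 'a)\<rparr>"
  interpret group G
  proof (rule groupI)
    fix y assume "y \<in> carrier G"
    then show "\<exists>z\<in>carrier G. z \<otimes>\<^bsub>G\<^esub> y = \<one>\<^bsub>G\<^esub>"
      by (intro bexI[of _ "inverse y"]) (auto simp: G_def)
  qed (auto simp: G_def mult_ac)
  have pow: "y [^]\<^bsub>G\<^esub> n = y ^ n" for y and n :: nat
    by (induction n) (simp_all add: G_def)
  have "x [^]\<^bsub>G\<^esub> order G = \<one>\<^bsub>G\<^esub>"
    using False by (intro pow_order_eq_1) (simp add: G_def)
  then have "x ^ (card (UNIV :: 'a set) - 1) = 1"
    unfolding pow by (simp add: order_def G_def card_Diff_singleton)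
  moreover obtain k where "card (UNIV :: 'a set) = Suc k"
    using finite_UNIV_card_ge_0[OF finite_UNIV] gr0_implies_Suc by blast
  ultimately show ?thesis
    by simp
qed (simp add: finite_UNIV_card_ge_0)

section \<open>The ring F[x]/(x^m - 1) and its involution\<close>

lemma degree_xm1: "0 < m \<Longrightarrow> degree (xm1 m :: 'a::field poly) = m"
proof -
  assume "0 < m"
  then have "degree (monom 1 m + - (1::'a poly)) = m"
    by (subst degree_add_eq_left) (auto simp: degree_monom_eq)
  then show ?thesis by (simp add: xm1_def)
qed

lemma xm1_neq_0: "0 < m \<Longrightarrow> (xm1 m :: 'a::field poly) \<noteq> 0"
  by (metis degree_0 degree_xm1 less_irrefl)

lemma degree_mod_xm1: "0 < m \<Longrightarrow> degree ((p :: 'a::field poly) mod xm1 m) < m"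
  using degree_mod_less'[OF xm1_neq_0, of m p] by (cases "p mod xm1 m = 0") (auto simp: degree_xm1)

lemma mod_xm1_eqI:
  fixes p r :: "'a::field poly"
  assumes "[p = r] (mod xm1 m)" and "degree r < m"
  shows "p mod xm1 m = r"
proof -
  have "r mod xm1 m = r"
    using assms(2) by (cases "m = 0") (auto intro: mod_poly_less simp: degree_xm1)
  then show ?thesis using assms(1) by (simp add: cong_def)
qed

lemma monom_cong_mod_xm1: "[monom (c::'a::field) k = monom c (k mod m)] (mod xm1 m)"
proof -
  have "[monom 1 m = (1::'a poly)] (mod xm1 m)"
    by (simp add: cong_iff_dvd_diff xm1_def)
  then have "[monom c (k mod m) * monom 1 m ^ (k div m) = monom c (k mod m) * 1 ^ (k div m)] (mod xm1 m)"
    by (intro cong_mult cong_pow cong_refl)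
  moreover have "monom c k = monom c (k mod m) * monom 1 m ^ (k div m)"
    by (simp add: monom_power mult_monom mult.commute)
  ultimately show ?thesis by simp
qed

lemma monom_mod_xm1: "0 < m \<Longrightarrow> monom (c::'a::field) k mod xm1 m = monom c (k mod m)"
  by (rule mod_xm1_eqI[OF monom_cong_mod_xm1]) (simp add: degree_monom_le le_less_trans[OF degree_monom_le])

lemma poly_as_sum_of_monoms_lessThan:
  "degree p < n \<Longrightarrow> (\<Sum>i<n. monom (coeff p i) i) = p"
  using poly_as_sum_of_monoms'[of p "n - 1"] by (cases n) (auto simp: lessThan_Suc_atMost)

lemma pcompose_cong_right:
  fixes p r r' :: "'a::field poly"
  assumes "[r = r'] (mod n)"
  shows "[pcompose p r = pcompose p r'] (mod n)"
proof (induction p)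
  case (pCons a p)
  then show ?case
    unfolding pcompose_pCons by (intro cong_add cong_mult cong_refl assms)
qed simp

lemma pcompose_cong_left:
  fixes p p' r :: "'a::field poly"
  assumes "[p = p'] (mod n)"
  shows "[pcompose p r = pcompose p' r] (mod pcompose n r)"
proof -
  obtain k where "p - p' = n * k" using assms by (auto simp: cong_iff_dvd_diff)
  then have "pcompose p r - pcompose p' r = pcompose n r * pcompose k r"
    by (metis pcompose_diff pcompose_mult)
  then show ?thesis by (simp add: cong_iff_dvd_diff)
qed

lemma pcompose_monom: "pcompose (monom c i) r = smult c (r ^ i)"
proof -
  have "pcompose ([:0, 1:] ^ i) r = r ^ i"
    by (induction i) (simp_all add: pcompose_mult pcompose_pCons pcompose_1)
  then show ?thesis by (simp add: monom_altdef pcompose_smult)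
qed

lemma pcompose_cong_mod_xm1:
  fixes p p' :: "'a::field poly"
  assumes "[p = p'] (mod xm1 m)"
  shows "[pcompose p (monom 1 e) = pcompose p' (monom 1 e)] (mod xm1 m)"
proof (rule cong_dvd_modulus)
  have "pcompose (xm1 m) (monom 1 e) = monom 1 (e * m) - (1::'a poly)"
    by (simp add: xm1_def pcompose_diff pcompose_monom pcompose_1 monom_power)
  then show "[pcompose p (monom 1 e) = pcompose p' (monom 1 e)] (mod monom 1 (e * m) - 1)"
    using pcompose_cong_left[OF assms, of "monom 1 e"] by simp
  show "xm1 m dvd monom (1::'a) (e * m) - 1"
    using monom_cong_mod_xm1[of "1::'a" "e * m" m] by (simp add: cong_iff_dvd_diff)
qed

lemma add_diff_mod_eq_0_iff:
  fixes i j m :: nat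
  assumes "i < m" "j < m"
  shows "(i + (m - j) mod m) mod m = 0 \<longleftrightarrow> i = j"
proof -
  have "(i + (m - j) mod m) mod m = (i + (m - j)) mod m"
    by (rule mod_add_right_eq)
  also have "\<dots> = (if j \<le> i then i - j else i + (m - j))"
  proof (cases "j \<le> i")
    case True
    then have "i + (m - j) = (i - j) + m" and "i - j < m"
      using assms by arith+
    then show ?thesis
      using True by (simp only: mod_add_self2) simp
  next
    case False
    then have "i + (m - j) < m"
      using assms by arith
    then show ?thesis
      using False by simp
  qed
  also have "\<dots> = 0 \<longleftrightarrow> i = j"
    using assms by auto
  finally show ?thesis .
qed
lemma diff_one_mult_mod: "(m - 1) * i mod m = (m - i) mod (m::nat)" if "i \<le> m"
proof (cases i)
  case (Suc k)
  then have "(m - 1) * i = (m - i) + m * k"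
    using that by (cases m) (auto simp: algebra_simps)
  then show ?thesis by simp
qed simp

lemma rbar_mod [simp]: "rbar m (a mod xm1 m) = rbar m a"
  by (simp add: rbar_def)

lemma rbar_cong: "[a = b] (mod xm1 m) \<Longrightarrow> rbar m a = rbar m b"
  unfolding cong_def by (drule arg_cong[where f = "rbar m"]) (simp only: rbar_mod)

lemma degree_rbar: "0 < m \<Longrightarrow> degree (rbar m a) < m"
  unfolding rbar_def by (rule degree_sum_less) (auto intro: le_less_trans[OF degree_monom_le])

lemma rbar_mod_xm1 [simp]: "0 < m \<Longrightarrow> rbar m a mod xm1 m = rbar m a"
  by (rule mod_xm1_eqI) (simp_all add: degree_rbar)

(* x^(m-1) is the inverse of x modulo x^m - 1. *)
lemma rbar_cong_pcompose:
  fixes a :: "'a::field poly"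
  assumes m: "0 < m"
  shows "[rbar m a = pcompose a (monom 1 (m - 1))] (mod xm1 m)"
proof -
  define c where "c i = coeff (a mod xm1 m) i" for i
  have "[pcompose a (monom 1 (m - 1)) = pcompose (a mod xm1 m) (monom 1 (m - 1))] (mod xm1 m)"
    by (rule pcompose_cong_mod_xm1) simp
  also have "pcompose (a mod xm1 m) (monom 1 (m - 1)) = (\<Sum>i<m. monom (c i) ((m - 1) * i))"
    by (subst poly_as_sum_of_monoms_lessThan[OF degree_mod_xm1[OF m], symmetric])
      (simp add: pcompose_sum pcompose_monom monom_power smult_monom c_def mult.commute)
  also have "[\<dots> = (\<Sum>i<m. monom (c i) ((m - i) mod m))] (mod xm1 m)"
  proof (rule cong_sum)
    fix i assume "i \<in> {..<m}"
    then have "(m - 1) * i mod m = (m - i) mod m"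
      by (intro diff_one_mult_mod) simp
    then show "[monom (c i) ((m - 1) * i) = monom (c i) ((m - i) mod m)] (mod xm1 m)"
      using monom_cong_mod_xm1[of "c i" "(m - 1) * i" m] by simp
  qed
  finally show ?thesis
    unfolding rbar_def c_def by (rule cong_sym)
qed

lemma rbar_eq_pcompose_mod:
  "0 < m \<Longrightarrow> rbar m a = pcompose a (monom 1 (m - 1)) mod xm1 m"
  using rbar_cong_pcompose[of m a] by (simp add: cong_def)

lemma rbar_0 [simp]: "rbar m 0 = 0"
  by (simp add: rbar_def)

lemma rbar_add: "0 < m \<Longrightarrow> rbar m (a + b) = rbar m a + rbar m b"
  by (simp add: rbar_eq_pcompose_mod pcompose_add poly_mod_add_left)

lemma rbar_minus: "0 < m \<Longrightarrow> rbar m (- a) = - rbar m a"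
  by (simp add: rbar_eq_pcompose_mod pcompose_uminus poly_mod_minus_left)

lemma rbar_mult:
  assumes m: "0 < m"
  shows "[rbar m (a * b) = rbar m a * rbar m b] (mod xm1 m)"
proof -
  let ?\<omega> = "monom 1 (m - 1)"
  have "[rbar m (a * b) = pcompose a ?\<omega> * pcompose b ?\<omega>] (mod xm1 m)"
    using rbar_cong_pcompose[OF m, of "a * b"] by (simp add: pcompose_mult)
  also have "[pcompose a ?\<omega> * pcompose b ?\<omega> = rbar m a * rbar m b] (mod xm1 m)"
    by (intro cong_mult cong_sym[OF rbar_cong_pcompose[OF m]])
  finally show ?thesis .
qed

lemma rbar_rbar: 
  fixes a :: "'a::field poly"
  assumes m: "0 < m"
  shows "rbar m (rbar m a) = a mod xm1 m"
proof -
  let ?\<omega> = "monom (1::'a) (m - 1)"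
  have "[rbar m (rbar m a) = pcompose (pcompose a ?\<omega>) ?\<omega>] (mod xm1 m)"
    using rbar_cong_pcompose[OF m, of "rbar m a"]
      pcompose_cong_mod_xm1[OF rbar_cong_pcompose[OF m, of a]] by (rule cong_trans)
  also have "pcompose (pcompose a ?\<omega>) ?\<omega> = pcompose a (monom 1 ((m - 1) * (m - 1)))"
    by (simp add: pcompose_monom monom_power flip: pcompose_assoc)
  also have "[\<dots> = pcompose a (monom 1 1)] (mod xm1 m)"
  proof (rule pcompose_cong_right)
    have "(m - 1) * (m - 1) mod m = 1 mod m"
      using diff_one_mult_mod[of "m - 1" m] m by simp
    then have "[monom 1 ((m - 1) * (m - 1)) = monom (1::'a) (1 mod m)] (mod xm1 m)"
      using monom_cong_mod_xm1[of 1 "(m - 1) * (m - 1)" m] by simp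
    then show "[monom 1 ((m - 1) * (m - 1)) = monom (1::'a) 1] (mod xm1 m)"
      by (rule cong_trans[OF _ cong_sym[OF monom_cong_mod_xm1]])
  qed
  also have "pcompose a (monom 1 1) = a"
  proof -
    have "monom (1::'a) 1 = [:0, 1:]"
      by (simp add: monom_Suc)
    then show ?thesis
      by (simp only: pcompose_idR)
  qed
  finally show ?thesis
    using m by (simp add: cong_def)
qed

lemma coeff_0_mod_mult_rbar:
  fixes a b :: "'a::field poly"
  assumes m: "0 < m"
  shows "coeff ((a * rbar m b) mod xm1 m) 0
    = (\<Sum>i<m. coeff (a mod xm1 m) i * coeff (b mod xm1 m) i)"
proof -
  define \<alpha> \<beta> where "\<alpha> i = coeff (a mod xm1 m) i" and "\<beta> i = coeff (b mod xm1 m) i" for i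
  have "[a * rbar m b = (a mod xm1 m) * rbar m b] (mod xm1 m)"
    by (simp add: cong_def mod_mult_left_eq)
  also have "(a mod xm1 m) * rbar m b = (\<Sum>i<m. \<Sum>j<m. monom (\<alpha> i * \<beta> j) (i + (m - j) mod m))"
    by (subst poly_as_sum_of_monoms_lessThan[OF degree_mod_xm1[OF m], symmetric])
      (simp add: rbar_def \<alpha>_def \<beta>_def sum_product mult_monom)
  also have "[\<dots> = (\<Sum>i<m. \<Sum>j<m. monom (\<alpha> i * \<beta> j) ((i + (m - j) mod m) mod m))] (mod xm1 m)"
    by (intro cong_sum monom_cong_mod_xm1)
  finally have "(a * rbar m b) mod xm1 m
      = (\<Sum>i<m. \<Sum>j<m. monom (\<alpha> i * \<beta> j) ((i + (m - j) mod m) mod m))"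
    by (rule mod_xm1_eqI) (intro degree_sum_less le_less_trans[OF degree_monom_le]; simp add: m)
  also have "coeff \<dots> 0 = (\<Sum>i<m. \<Sum>j<m. if i = j then \<alpha> i * \<beta> j else 0)"
    unfolding coeff_sum coeff_monom
  proof (intro sum.cong refl)
    fix i j assume "i \<in> {..<m}" "j \<in> {..<m}"
    then show "(if (i + (m - j) mod m) mod m = 0 then \<alpha> i * \<beta> j else 0)
        = (if i = j then \<alpha> i * \<beta> j else 0)"
      by (simp add: add_diff_mod_eq_0_iff)
  qed
  also have "\<dots> = (\<Sum>i<m. \<alpha> i * \<beta> i)"
    by (intro sum.cong refl) simp
  finally show ?thesis
    unfolding \<alpha>_def \<beta>_def .
qed

lemma xm1_dvd_iff_coeff_0_mod_mult_rbar:
  fixes p :: "'a::field poly"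
  assumes m: "0 < m"
  shows "xm1 m dvd p \<longleftrightarrow> (\<forall>s. degree s < m \<longrightarrow> coeff ((p * rbar m s) mod xm1 m) 0 = 0)"
proof
  assume "xm1 m dvd p"
  then show "\<forall>s. degree s < m \<longrightarrow> coeff ((p * rbar m s) mod xm1 m) 0 = 0"
    by simp
next
  assume orth: "\<forall>s. degree s < m \<longrightarrow> coeff ((p * rbar m s) mod xm1 m) 0 = 0"
  have "coeff (p mod xm1 m) k = 0" for k
  proof (cases "k < m")
    case True
    have "coeff ((p * rbar m (monom 1 k)) mod xm1 m) 0 = coeff (p mod xm1 m) k"
      using True
      by (simp add: coeff_0_mod_mult_rbar[OF m] monom_mod_xm1[OF m] coeff_monom flip: of_bool_def)
    then show ?thesis
      using orth True by (simp add: degree_monom_eq)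
  next
    case False
    then show ?thesis
      using degree_mod_xm1[OF m, of p] by (simp add: coeff_eq_0)
  qed
  then have "p mod xm1 m = 0"
    by (simp add: poly_eq_iff)
  then show "xm1 m dvd p"
    using mod_eq_0_iff_dvd by blast
qed

section \<open>Sesquilinear forms on quasi-cyclic codes\<close>

definition sesq_ip :: "('a::comm_ring_1 \<Rightarrow> 'a) \<Rightarrow> 'a list \<Rightarrow> 'a list \<Rightarrow> 'a" where
  "sesq_ip \<sigma> u v = (\<Sum>i<length u. \<sigma> (u ! i) * v ! i)"

lemma euclid_ip_eq_sesq_ip: "euclid_ip = sesq_ip (\<lambda>x. x)"
  by (intro ext) (simp add: euclid_ip_def sesq_ip_def)

lemma herm_ip_eq_sesq_ip: "herm_ip q = sesq_ip (\<lambda>x. x ^ q)"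
  by (intro ext) (simp add: herm_ip_def sesq_ip_def)

lemma length_cvec [simp]: "length (cvec m a) = m"
  by (simp add: cvec_def)

lemma nth_cvec: "i < m \<Longrightarrow> cvec m a ! i = coeff (a mod xm1 m) i"
  by (simp add: cvec_def)

lemma sum_lessThan_add_split:
  fixes m n :: nat
  shows "(\<Sum>i<m + n. f i) = (\<Sum>i<m. f i) + (\<Sum>i<n. f (m + i))"
  by (induction n) (simp_all add: add.assoc)

lemma ball_qc_code_iff:
  "(\<forall>c\<in>qc_code m a11 a12 a21 a22. P c) \<longleftrightarrow>
    (\<forall>s1 s2. degree s1 < m \<longrightarrow> degree s2 < m \<longrightarrow>
      P (cvec m (s1 * a11 + s2 * a21) @ cvec m (s1 * a12 + s2 * a22)))"
  by (auto simp: qc_code_def)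

lemma self_orth_qc_code_iff_orthogonal:
  "self_orth (2 * m) B (qc_code m a11 a12 a21 a22) \<longleftrightarrow>
    (\<forall>u\<in>qc_code m a11 a12 a21 a22. \<forall>v\<in>qc_code m a11 a12 a21 a22. B u v = 0)"
  by (auto simp: self_orth_def dual_code_def qc_code_def)

lemma xm1_dvd_iff_rdvd:
  fixes p g h y :: "'a::field poly"
  assumes "xm1 m = g * h" and "g \<noteq> 0" and "[p = g * y] (mod xm1 m)"
  shows "xm1 m dvd p \<longleftrightarrow> rdvd m h y"
proof -
  have "xm1 m dvd p \<longleftrightarrow> g * h dvd g * y"
    using assms(1,3) by (simp add: cong_dvd_iff)
  also have "\<dots> \<longleftrightarrow> h dvd y"
    using assms(2) by simp
  also have "\<dots> \<longleftrightarrow> h dvd y mod xm1 m"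
    using assms(1) by (simp add: dvd_mod_iff)
  finally show ?thesis
    by (simp add: rdvd_def)
qed

(* Covers the Euclidean (identity) and the Hermitian (x |-> x^q over F_(q^2)) forms. *)
locale field_involution =
  fixes conj :: "'a::field \<Rightarrow> 'a"
  assumes conj_add: "conj (x + y) = conj x + conj y"
    and conj_mult: "conj (x * y) = conj x * conj y"
    and conj_conj [simp]: "conj (conj x) = x"
begin

lemma conj_0 [simp]: "conj 0 = 0"
  using conj_add[of 0 0] by (metis add_cancel_right_right)

lemma conj_1 [simp]: "conj 1 = 1"
  using conj_mult[of 1 "conj 1"] by simp

lemma conj_eq_0_iff [simp]: "conj x = 0 \<longleftrightarrow> x = 0"
  using conj_conj conj_0 by metis

lemma conj_minus: "conj (- x) = - conj x"
  using conj_add[of x "- x"] by (simp add: eq_neg_iff_add_eq_0 add.commute)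

lemma conj_sum: "conj (sum f A) = (\<Sum>a\<in>A. conj (f a))"
  by (induction A rule: infinite_finite_induct) (simp_all add: conj_add)

abbreviation pconj :: "'a poly \<Rightarrow> 'a poly" where
  "pconj \<equiv> map_poly conj"

lemma coeff_pconj [simp]: "coeff (pconj p) n = conj (coeff p n)"
  by (simp add: coeff_map_poly)

lemma pconj_add: "pconj (p + q) = pconj p + pconj q"
  by (rule poly_eqI) (simp add: conj_add)

lemma pconj_minus: "pconj (- p) = - pconj p"
  by (rule poly_eqI) (simp add: conj_minus)

lemma pconj_diff: "pconj (p - q) = pconj p - pconj q"
  using pconj_add[of p "- q"] by (simp add: pconj_minus)

lemma pconj_mult: "pconj (p * q) = pconj p * pconj q"
  by (rule poly_eqI) (simp add: coeff_mult conj_sum conj_mult)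

lemma pconj_sum: "pconj (sum f A) = (\<Sum>a\<in>A. pconj (f a))"
  by (induction A rule: infinite_finite_induct) (simp_all add: pconj_add)

lemma pconj_pconj [simp]: "pconj (pconj p) = p"
  by (rule poly_eqI) simp

lemma pconj_eq_0_iff [simp]: "pconj p = 0 \<longleftrightarrow> p = 0"
  by (metis map_poly_0 pconj_pconj)

lemma pconj_xm1 [simp]: "pconj (xm1 m) = xm1 m"
  by (simp add: xm1_def pconj_diff map_poly_monom)

lemma degree_pconj [simp]: "degree (pconj p) = degree p"
  by (rule degree_map_poly) simp

lemma pconj_cong: "[p = q] (mod xm1 m) \<Longrightarrow> [pconj p = pconj q] (mod xm1 m)"
  by (metis cong_iff_dvd_diff dvd_def pconj_diff pconj_mult pconj_xm1)

lemma pconj_mod_xm1: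
  assumes m: "0 < m"
  shows "pconj (p mod xm1 m) = pconj p mod xm1 m"
proof (rule sym, rule mod_xm1_eqI)
  show "[pconj p = pconj (p mod xm1 m)] (mod xm1 m)"
    by (rule pconj_cong) simp
  show "degree (pconj (p mod xm1 m)) < m"
    using degree_mod_xm1[OF m] by simp
qed

lemma rbar_pconj: "0 < m \<Longrightarrow> rbar m (pconj a) = pconj (rbar m a)"
  by (simp add: rbar_def pconj_sum map_poly_monom flip: pconj_mod_xm1)

(* Its constant coefficient modulo x^m - 1 is the form of the words (a1, a2) and (b1, b2). *)
definition qc_form :: "nat \<Rightarrow> 'a poly \<Rightarrow> 'a poly \<Rightarrow> 'a poly \<Rightarrow> 'a poly \<Rightarrow> 'a poly" where
  "qc_form m a1 a2 b1 b2 = pconj a1 * rbar m b1 + pconj a2 * rbar m b2"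

lemma sesq_ip_cvec_append:
  assumes m: "0 < m"
  shows "sesq_ip conj (cvec m a1 @ cvec m a2) (cvec m b1 @ cvec m b2)
    = coeff (qc_form m a1 a2 b1 b2 mod xm1 m) 0"
proof -
  have "sesq_ip conj (cvec m a1 @ cvec m a2) (cvec m b1 @ cvec m b2)
      = (\<Sum>i<m. conj (coeff (a1 mod xm1 m) i) * coeff (b1 mod xm1 m) i)
      + (\<Sum>i<m. conj (coeff (a2 mod xm1 m) i) * coeff (b2 mod xm1 m) i)"
    by (simp add: sesq_ip_def sum_lessThan_add_split nth_append nth_cvec)
  also have "\<dots> = coeff ((pconj a1 * rbar m b1) mod xm1 m) 0 + coeff ((pconj a2 * rbar m b2) mod xm1 m) 0"
    by (simp add: coeff_0_mod_mult_rbar[OF m] flip: pconj_mod_xm1[OF m])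
  finally show ?thesis
    by (simp add: qc_form_def poly_mod_add_left)
qed

lemma qc_form_expand:
  assumes m: "0 < m"
  shows "[qc_form m (r1 * a11 + r2 * a21) (r1 * a12 + r2 * a22) (s1 * b11 + s2 * b21) (s1 * b12 + s2 * b22)
    = pconj r1 * rbar m s1 * qc_form m a11 a12 b11 b12 + pconj r1 * rbar m s2 * qc_form m a11 a12 b21 b22
    + pconj r2 * rbar m s1 * qc_form m a21 a22 b11 b12 + pconj r2 * rbar m s2 * qc_form m a21 a22 b21 b22]
    (mod xm1 m)"
proof -
  have lin: "[rbar m (s1 * b + s2 * b') = rbar m s1 * rbar m b + rbar m s2 * rbar m b'] (mod xm1 m)" for b b'
    unfolding rbar_add[OF m] by (intro cong_add rbar_mult m)
  have "[qc_form m (r1 * a11 + r2 * a21) (r1 * a12 + r2 * a22) (s1 * b11 + s2 * b21) (s1 * b12 + s2 * b22)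
    = pconj (r1 * a11 + r2 * a21) * (rbar m s1 * rbar m b11 + rbar m s2 * rbar m b21)
    + pconj (r1 * a12 + r2 * a22) * (rbar m s1 * rbar m b12 + rbar m s2 * rbar m b22)] (mod xm1 m)"
    (is "[_ = ?expanded] (mod _)")
    unfolding qc_form_def by (intro cong_add cong_mult cong_refl lin)
  also have "?expanded = pconj r1 * rbar m s1 * qc_form m a11 a12 b11 b12 + pconj r1 * rbar m s2 * qc_form m a11 a12 b21 b22
    + pconj r2 * rbar m s1 * qc_form m a21 a22 b11 b12 + pconj r2 * rbar m s2 * qc_form m a21 a22 b21 b22"
    by (simp add: qc_form_def pconj_add pconj_mult algebra_simps)
  finally show ?thesis .
qed

lemma qc_form_swap:
  assumes m: "0 < m"
  shows "[qc_form m b1 b2 a1 a2 = rbar m (pconj (qc_form m a1 a2 b1 b2))] (mod xm1 m)"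
proof -
  have swap: "[pconj b * rbar m a = rbar m (pconj (pconj a * rbar m b))] (mod xm1 m)" for a b
  proof -
    have "rbar m (pconj (pconj a * rbar m b)) = rbar m (a * rbar m (pconj b))"
      by (simp add: pconj_mult rbar_pconj m)
    also have "[\<dots> = rbar m a * rbar m (rbar m (pconj b))] (mod xm1 m)"
      by (rule rbar_mult[OF m])
    also have "rbar m a * rbar m (rbar m (pconj b)) = rbar m a * (pconj b mod xm1 m)"
      by (simp add: rbar_rbar m)
    also have "[\<dots> = pconj b * rbar m a] (mod xm1 m)"
      by (simp add: cong_def mod_mult_right_eq mult.commute)
    finally show ?thesis
      by (rule cong_sym)
  qed
  show ?thesis
    unfolding qc_form_def pconj_add rbar_add[OF m] by (intro cong_add swap)
qed

lemma qc_code_orthogonal_iff: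
  assumes m: "0 < m"
  shows "(\<forall>c\<in>qc_code m a11 a12 a21 a22. \<forall>d\<in>qc_code m b11 b12 b21 b22. sesq_ip conj c d = 0) \<longleftrightarrow>
    xm1 m dvd qc_form m a11 a12 b11 b12 \<and> xm1 m dvd qc_form m a11 a12 b21 b22 \<and>
    xm1 m dvd qc_form m a21 a22 b11 b12 \<and> xm1 m dvd qc_form m a21 a22 b21 b22"
    (is "?orth \<longleftrightarrow> ?dvd")
proof -
  define E where "E r1 r2 s1 s2 =
    pconj r1 * rbar m s1 * qc_form m a11 a12 b11 b12 + pconj r1 * rbar m s2 * qc_form m a11 a12 b21 b22
    + pconj r2 * rbar m s1 * qc_form m a21 a22 b11 b12 + pconj r2 * rbar m s2 * qc_form m a21 a22 b21 b22"
    for r1 r2 s1 s2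
  have ip: "sesq_ip conj (cvec m (r1 * a11 + r2 * a21) @ cvec m (r1 * a12 + r2 * a22))
      (cvec m (s1 * b11 + s2 * b21) @ cvec m (s1 * b12 + s2 * b22)) = coeff (E r1 r2 s1 s2 mod xm1 m) 0"
    for r1 r2 s1 s2
    using qc_form_expand[OF m] by (simp add: sesq_ip_cvec_append[OF m] E_def cong_def)
  have "?orth \<longleftrightarrow> (\<forall>r1 r2. degree r1 < m \<longrightarrow> degree r2 < m \<longrightarrow>
      (\<forall>s1 s2. degree s1 < m \<longrightarrow> degree s2 < m \<longrightarrow> coeff (E r1 r2 s1 s2 mod xm1 m) 0 = 0))"
    (is "_ \<longleftrightarrow> ?tests")
    by (simp only: ball_qc_code_iff ip)
  also have "?tests \<longleftrightarrow> ?dvd"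
  proof
    assume orth: ?tests
    have "coeff ((qc_form m a11 a12 b11 b12 * rbar m s) mod xm1 m) 0 = 0"
      and "coeff ((qc_form m a11 a12 b21 b22 * rbar m s) mod xm1 m) 0 = 0"
      and "coeff ((qc_form m a21 a22 b11 b12 * rbar m s) mod xm1 m) 0 = 0"
      and "coeff ((qc_form m a21 a22 b21 b22 * rbar m s) mod xm1 m) 0 = 0"
      if "degree s < m" for s
      using orth[rule_format, of 1 0 s 0] orth[rule_format, of 1 0 0 s]
        orth[rule_format, of 0 1 s 0] orth[rule_format, of 0 1 0 s] that m
      by (simp_all add: E_def mult.commute)
    then show ?dvd
      by (simp add: xm1_dvd_iff_coeff_0_mod_mult_rbar[OF m])
  next
    assume ?dvd
    then show ?tests
      by (simp add: E_def)
  qed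
  finally show ?thesis .
qed

section \<open>Self-orthogonality of the two-generator codes\<close>

lemma qc_form_swap_dvd:
  assumes m: "0 < m" and "xm1 m dvd qc_form m a1 a2 b1 b2"
  shows "xm1 m dvd qc_form m b1 b2 a1 a2"
proof -
  have "[pconj (qc_form m a1 a2 b1 b2) = 0] (mod xm1 m)"
    using pconj_cong[of _ 0] assms(2) by (simp add: cong_0_iff)
  then have "rbar m (pconj (qc_form m a1 a2 b1 b2)) = rbar m 0"
    by (rule rbar_cong)
  then show ?thesis
    using qc_form_swap[OF m, of b1 b2 a1 a2] by (simp add: cong_0_iff)
qed

lemma qc_form_generators_cong:
  assumes m: "0 < m"
  shows "[qc_form m g1 (v1 * g1) g1 (v1 * g1) = pconj g1 * (rbar m g1 * (1 + pconj v1 * rbar m v1))]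
      (mod xm1 m)"
    and "[qc_form m g1 (v1 * g1) (v2 * g2) g2 = pconj g1 * (rbar m g2 * (rbar m v2 + pconj v1))]
      (mod xm1 m)"
    and "[qc_form m (v2 * g2) g2 (v2 * g2) g2 = pconj g2 * (rbar m g2 * (pconj v2 * rbar m v2 + 1))]
      (mod xm1 m)"
proof -
  have "[qc_form m g1 (v1 * g1) g1 (v1 * g1)
      = pconj g1 * rbar m g1 + pconj (v1 * g1) * (rbar m v1 * rbar m g1)] (mod xm1 m)"
    unfolding qc_form_def by (intro cong_add cong_mult cong_refl rbar_mult m)
  then show "[qc_form m g1 (v1 * g1) g1 (v1 * g1)
      = pconj g1 * (rbar m g1 * (1 + pconj v1 * rbar m v1))] (mod xm1 m)"
    by (simp add: pconj_mult algebra_simps)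
  have "[qc_form m g1 (v1 * g1) (v2 * g2) g2
      = pconj g1 * (rbar m v2 * rbar m g2) + pconj (v1 * g1) * rbar m g2] (mod xm1 m)"
    unfolding qc_form_def by (intro cong_add cong_mult cong_refl rbar_mult m)
  then show "[qc_form m g1 (v1 * g1) (v2 * g2) g2
      = pconj g1 * (rbar m g2 * (rbar m v2 + pconj v1))] (mod xm1 m)"
    by (simp add: pconj_mult algebra_simps)
  have "[qc_form m (v2 * g2) g2 (v2 * g2) g2
      = pconj (v2 * g2) * (rbar m v2 * rbar m g2) + pconj g2 * rbar m g2] (mod xm1 m)"
    unfolding qc_form_def by (intro cong_add cong_mult cong_refl rbar_mult m)
  then show "[qc_form m (v2 * g2) g2 (v2 * g2) g2
      = pconj g2 * (rbar m g2 * (pconj v2 * rbar m v2 + 1))] (mod xm1 m)"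
    by (simp add: pconj_mult algebra_simps)
qed

theorem self_orth_qc_code_iff:
  assumes m: "0 < m" and g1: "g1 dvd xm1 m" and g2: "g2 dvd xm1 m"
  shows "self_orth (2 * m) (sesq_ip conj) (qc_code m g1 (v1 * g1) (v2 * g2) g2) \<longleftrightarrow>
    rdvd m (pconj (xm1 m div g1)) (rbar m g1 * (1 + pconj v1 * rbar m v1)) \<and>
    rdvd m (pconj (xm1 m div g1)) (rbar m g2 * (rbar m v2 + pconj v1)) \<and>
    rdvd m (pconj (xm1 m div g2)) (rbar m g2 * (pconj v2 * rbar m v2 + 1))"
    (is "_ \<longleftrightarrow> ?conditions")
proof -
  let ?\<Phi> = "qc_form m"
  have factor: "xm1 m = pconj g * pconj (xm1 m div g)" "pconj g \<noteq> 0" if "g dvd xm1 m" for g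
    using that xm1_neq_0[OF m] by (auto simp flip: pconj_mult)
  have "self_orth (2 * m) (sesq_ip conj) (qc_code m g1 (v1 * g1) (v2 * g2) g2) \<longleftrightarrow>
      xm1 m dvd ?\<Phi> g1 (v1 * g1) g1 (v1 * g1) \<and> xm1 m dvd ?\<Phi> g1 (v1 * g1) (v2 * g2) g2 \<and>
      xm1 m dvd ?\<Phi> (v2 * g2) g2 g1 (v1 * g1) \<and> xm1 m dvd ?\<Phi> (v2 * g2) g2 (v2 * g2) g2"
    unfolding self_orth_qc_code_iff_orthogonal by (rule qc_code_orthogonal_iff[OF m])
  also have "\<dots> \<longleftrightarrow> xm1 m dvd ?\<Phi> g1 (v1 * g1) g1 (v1 * g1) \<and>
      xm1 m dvd ?\<Phi> g1 (v1 * g1) (v2 * g2) g2 \<and> xm1 m dvd ?\<Phi> (v2 * g2) g2 (v2 * g2) g2"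
    using qc_form_swap_dvd[OF m] by blast
  also have "\<dots> \<longleftrightarrow> ?conditions"
    using xm1_dvd_iff_rdvd[OF factor[OF g1] qc_form_generators_cong(1)[OF m]]
      xm1_dvd_iff_rdvd[OF factor[OF g1] qc_form_generators_cong(2)[OF m]]
      xm1_dvd_iff_rdvd[OF factor[OF g2] qc_form_generators_cong(3)[OF m]] by simp
  finally show ?thesis .
qed

end

interpretation identity: field_involution "\<lambda>x::'a::field. x"
  by unfold_locales simp_all

lemma sympl_ip_cvec_append:
  assumes m: "0 < m"
  shows "sympl_ip m (cvec m a1 @ cvec m a2) (cvec m b1 @ cvec m b2)
    = euclid_ip (cvec m a1 @ cvec m a2) (cvec m b2 @ cvec m (- b1))"
  using m by (simp add: sympl_ip_def euclid_ip_def sum_lessThan_add_split nth_append nth_cvec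
      poly_mod_minus_left sum_subtractf sum_negf)

lemma sympl_self_orth_iff_orthogonal:
  assumes m: "0 < m"
  shows "self_orth (2 * m) (sympl_ip m) (qc_code m a11 a12 a21 a22) \<longleftrightarrow>
    (\<forall>c\<in>qc_code m a11 a12 a21 a22. \<forall>d\<in>qc_code m a12 (- a11) a22 (- a21). euclid_ip c d = 0)"
  unfolding self_orth_qc_code_iff_orthogonal ball_qc_code_iff sympl_ip_cvec_append[OF m]
  by (simp only: minus_add_distrib mult_minus_right)

lemma identity_qc_form: "identity.qc_form m a1 a2 b1 b2 = a1 * rbar m b1 + a2 * rbar m b2"
  by (simp add: identity.qc_form_def)

lemma sympl_form_antisym_dvd:
  assumes m: "0 < m" and "xm1 m dvd identity.qc_form m a1 a2 b2 (- b1)"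
  shows "xm1 m dvd identity.qc_form m b1 b2 a2 (- a1)"
proof -
  have "identity.qc_form m a2 (- a1) b1 b2 = - identity.qc_form m a1 a2 b2 (- b1)"
    by (simp add: identity_qc_form rbar_minus[OF m] algebra_simps)
  then have "xm1 m dvd identity.qc_form m a2 (- a1) b1 b2"
    using assms(2) by simp
  then show ?thesis
    by (rule identity.qc_form_swap_dvd[OF m])
qed

lemma sympl_form_generators_cong:
  fixes g1 g2 v1 v2 :: "'a::field poly"
  assumes m: "0 < m"
  shows "[identity.qc_form m g1 (v1 * g1) (v1 * g1) (- g1) = g1 * (rbar m g1 * (rbar m v1 - v1))]
      (mod xm1 m)"
    and "[identity.qc_form m g1 (v1 * g1) g2 (- (v2 * g2)) = g1 * (rbar m g2 * (1 - rbar m v2 * v1))]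
      (mod xm1 m)"
    and "[identity.qc_form m (v2 * g2) g2 g2 (- (v2 * g2)) = g2 * (rbar m g2 * (v2 - rbar m v2))]
      (mod xm1 m)"
proof -
  have "[identity.qc_form m g1 (v1 * g1) (v1 * g1) (- g1)
      = g1 * (rbar m v1 * rbar m g1) + v1 * g1 * - rbar m g1] (mod xm1 m)"
    unfolding identity_qc_form rbar_minus[OF m] by (intro cong_add cong_mult cong_refl rbar_mult m)
  then show "[identity.qc_form m g1 (v1 * g1) (v1 * g1) (- g1)
      = g1 * (rbar m g1 * (rbar m v1 - v1))] (mod xm1 m)"
    by (simp add: algebra_simps)
  have "[identity.qc_form m g1 (v1 * g1) g2 (- (v2 * g2))
      = g1 * rbar m g2 + v1 * g1 * - (rbar m v2 * rbar m g2)] (mod xm1 m)"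
    unfolding identity_qc_form rbar_minus[OF m]
    by (intro cong_add cong_mult cong_uminus cong_refl rbar_mult m)
  then show "[identity.qc_form m g1 (v1 * g1) g2 (- (v2 * g2))
      = g1 * (rbar m g2 * (1 - rbar m v2 * v1))] (mod xm1 m)"
    by (simp add: algebra_simps)
  have "[identity.qc_form m (v2 * g2) g2 g2 (- (v2 * g2))
      = v2 * g2 * rbar m g2 + g2 * - (rbar m v2 * rbar m g2)] (mod xm1 m)"
    unfolding identity_qc_form rbar_minus[OF m]
    by (intro cong_add cong_mult cong_uminus cong_refl rbar_mult m)
  then show "[identity.qc_form m (v2 * g2) g2 g2 (- (v2 * g2))
      = g2 * (rbar m g2 * (v2 - rbar m v2))] (mod xm1 m)"
    by (simp add: algebra_simps)
qed

theorem sympl_self_orth_qc_code_iff: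
  fixes g1 g2 v1 v2 :: "'a::field poly"
  assumes m: "0 < m" and g1: "g1 dvd xm1 m" and g2: "g2 dvd xm1 m"
  shows "self_orth (2 * m) (sympl_ip m) (qc_code m g1 (v1 * g1) (v2 * g2) g2) \<longleftrightarrow>
    rdvd m (xm1 m div g1) (rbar m g1 * (rbar m v1 - v1)) \<and>
    rdvd m (xm1 m div g1) (rbar m g2 * (1 - rbar m v2 * v1)) \<and>
    rdvd m (xm1 m div g2) (rbar m g2 * (v2 - rbar m v2))"
    (is "_ \<longleftrightarrow> ?conditions")
proof -
  let ?\<Phi> = "identity.qc_form m"
  have factor: "xm1 m = g * (xm1 m div g)" "g \<noteq> 0" if "g dvd xm1 m" for g :: "'a poly"
    using that xm1_neq_0[OF m] by auto
  have "self_orth (2 * m) (sympl_ip m) (qc_code m g1 (v1 * g1) (v2 * g2) g2) \<longleftrightarrow>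
      xm1 m dvd ?\<Phi> g1 (v1 * g1) (v1 * g1) (- g1) \<and> xm1 m dvd ?\<Phi> g1 (v1 * g1) g2 (- (v2 * g2)) \<and>
      xm1 m dvd ?\<Phi> (v2 * g2) g2 (v1 * g1) (- g1) \<and> xm1 m dvd ?\<Phi> (v2 * g2) g2 g2 (- (v2 * g2))"
    unfolding sympl_self_orth_iff_orthogonal[OF m] euclid_ip_eq_sesq_ip
    by (rule identity.qc_code_orthogonal_iff[OF m])
  also have "\<dots> \<longleftrightarrow> xm1 m dvd ?\<Phi> g1 (v1 * g1) (v1 * g1) (- g1) \<and>
      xm1 m dvd ?\<Phi> g1 (v1 * g1) g2 (- (v2 * g2)) \<and> xm1 m dvd ?\<Phi> (v2 * g2) g2 g2 (- (v2 * g2))"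
    using sympl_form_antisym_dvd[OF m] by blast
  also have "\<dots> \<longleftrightarrow> ?conditions"
    using xm1_dvd_iff_rdvd[OF factor[OF g1] sympl_form_generators_cong(1)[OF m]]
      xm1_dvd_iff_rdvd[OF factor[OF g1] sympl_form_generators_cong(2)[OF m]]
      xm1_dvd_iff_rdvd[OF factor[OF g2] sympl_form_generators_cong(3)[OF m]] by simp
  finally show ?thesis .
qed

corollary euclid_self_orth_qc_code_iff:
  fixes g1 g2 v1 v2 :: "'a::field poly"
  assumes "0 < m" and "g1 dvd xm1 m" and "g2 dvd xm1 m"
  shows "self_orth (2 * m) euclid_ip (qc_code m g1 (v1 * g1) (v2 * g2) g2) \<longleftrightarrow>
    rdvd m (xm1 m div g1) (rbar m g1 * (1 + v1 * rbar m v1)) \<and>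
    rdvd m (xm1 m div g1) (rbar m g2 * (rbar m v2 + v1)) \<and>
    rdvd m (xm1 m div g2) (rbar m g2 * (1 + v2 * rbar m v2))"
  unfolding euclid_ip_eq_sesq_ip
  using identity.self_orth_qc_code_iff[OF assms, of v1 v2]
  by (simp only: map_poly_id' add.commute[of "v2 * rbar m v2" 1])

lemma frobenius_field_involution:
  fixes q :: nat
  assumes card: "card (UNIV :: 'a::{finite,field} set) = q ^ 2"
  shows "field_involution (\<lambda>x::'a. x ^ q)"
proof
  obtain n where "card (UNIV :: 'a set) = CHAR('a) ^ n"
    using card_UNIV_eq_CHAR_power by blast
  moreover have "q dvd q ^ 2"
    by (simp add: power2_eq_square)
  ultimately have "q dvd CHAR('a) ^ n"
    using card by simp
  then obtain j where q: "q = CHAR('a) ^ j"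
    using divides_primepow_nat[OF prime_CHAR_finite_field] by blast
  show "(x + y) ^ q = x ^ q + y ^ q" for x y :: 'a
    by (rule freshmans_dream'[OF prime_CHAR_finite_field q])
  show "(x * y) ^ q = x ^ q * y ^ q" for x y :: 'a
    by (rule power_mult_distrib)
  show "(x ^ q) ^ q = x" for x :: 'a
  proof -
    have "(x ^ q) ^ q = x ^ card (UNIV :: 'a set)"
      by (simp only: card power2_eq_square power_mult)
    then show ?thesis
      using power_card_UNIV_eq_self[of x] by (rule trans)
  qed
qed

corollary herm_self_orth_qc_code_iff:
  fixes g1 g2 v1 v2 :: "'a::{finite,field} poly"
  assumes "card (UNIV :: 'a set) = q ^ 2" and "0 < m" and "g1 dvd xm1 m" and "g2 dvd xm1 m"
  shows "self_orth (2 * m) (herm_ip q) (qc_code m g1 (v1 * g1) (v2 * g2) g2) \<longleftrightarrow>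
    rdvd m (qpow q (xm1 m div g1)) (rbar m g1 * (1 + qpow q v1 * rbar m v1)) \<and>
    rdvd m (qpow q (xm1 m div g1)) (rbar m g2 * (rbar m v2 + qpow q v1)) \<and>
    rdvd m (qpow q (xm1 m div g2)) (rbar m g2 * (qpow q v2 * rbar m v2 + 1))"
  unfolding herm_ip_eq_sesq_ip qpow_def
  by (rule field_involution.self_orth_qc_code_iff[OF frobenius_field_involution assms(2-4)])
    (rule assms(1))

theorem mainTheorem4:
  fixes m :: nat
  assumes "0 < m"
  shows
  "(\<forall>(g1::'a::{finite,field_gcd} poly) g2 v1 v2.
      lead_coeff g1 = 1 \<and> g1 dvd xm1 m \<and> lead_coeff g2 = 1 \<and> g2 dvd xm1 m \<and>
      degree v1 < m \<and> degree v2 < m \<and> gcd (v1 * v2 - 1) (xm1 m) = 1 \<longrightarrow>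
      (let h1 = xm1 m div g1; h2 = xm1 m div g2 in
        self_orth (2 * m) euclid_ip (qc_code m g1 (v1 * g1) (v2 * g2) g2) \<longleftrightarrow>
          rdvd m h1 (rbar m g1 * (1 + v1 * rbar m v1)) \<and>
          rdvd m h1 (rbar m g2 * (rbar m v2 + v1)) \<and>
          rdvd m h2 (rbar m g2 * (1 + v2 * rbar m v2))))
 \<and> (\<forall>(q::nat) (g1::'b::{finite,field_gcd} poly) g2 v1 v2.
      card (UNIV :: 'b set) = q ^ 2 \<and>
      lead_coeff g1 = 1 \<and> g1 dvd xm1 m \<and> lead_coeff g2 = 1 \<and> g2 dvd xm1 m \<and>
      degree v1 < m \<and> degree v2 < m \<and> gcd (v1 * v2 - 1) (xm1 m) = 1 \<longrightarrow>
      (let h1 = xm1 m div g1; h2 = xm1 m div g2 in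
        self_orth (2 * m) (herm_ip q) (qc_code m g1 (v1 * g1) (v2 * g2) g2) \<longleftrightarrow>
          rdvd m (qpow q h1) (rbar m g1 * (1 + qpow q v1 * rbar m v1)) \<and>
          rdvd m (qpow q h1) (rbar m g2 * (rbar m v2 + qpow q v1)) \<and>
          rdvd m (qpow q h2) (rbar m g2 * (qpow q v2 * rbar m v2 + 1))))
 \<and> (\<forall>(g1::'a::{finite,field_gcd} poly) g2 v1 v2.
      lead_coeff g1 = 1 \<and> g1 dvd xm1 m \<and> lead_coeff g2 = 1 \<and> g2 dvd xm1 m \<and>
      degree v1 < m \<and> degree v2 < m \<and> gcd (v1 * v2 - 1) (xm1 m) = 1 \<longrightarrow>
      (let h1 = xm1 m div g1; h2 = xm1 m div g2 in
        self_orth (2 * m) (sympl_ip m) (qc_code m g1 (v1 * g1) (v2 * g2) g2) \<longleftrightarrow>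
          rdvd m h1 (rbar m g1 * (rbar m v1 - v1)) \<and>
          rdvd m h1 (rbar m g2 * (1 - rbar m v2 * v1)) \<and>
          rdvd m h2 (rbar m g2 * (v2 - rbar m v2))))"
  unfolding Let_def
  by (intro conjI allI impI; elim conjE)
    (rule euclid_self_orth_qc_code_iff[OF assms] herm_self_orth_qc_code_iff[OF _ assms]
      sympl_self_orth_qc_code_iff[OF assms]; assumption)+

end
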